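(* Let $1\le k\le r-1$, let $x\in\mathcal{K}_k(c,H)$, and let $q_{k-1}\in\mathbb{R}^n$ satisfy $q_{k-1} /\!/ \hat q_{k-1}$. Then the denominator $\hat g_k^T H\hat g_k\, q_{k-1}^T H q_{k-1}-(\hat g_k^T H q_{k-1})^2$ is nonzero and $$p^N_k(x)=p^N_{k-1}(x)+\beta_k\hat g_k+\gamma_{k-1}q_{k-1},$$ where $$\beta_k=-\frac{\hat g_k^T\hat g_k\; q_{k-1}^THq_{k-1}}{\hat g_k^TH\hat g_k\; q_{k-1}^THq_{k-1}-(\hat g_k^THq_{k-1})^2},\qquad \gamma_{k-1}=\frac{\hat g_k^T\hat g_k\; q_{k-1}^TH\hat g_k}{\hat g_k^TH\hat g_k\; q_{k-1}^THq_{k-1}-(\hat g_k^THq_{k-1})^2}.$$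
   Context: Let $H\in\mathbb{R}^{n\times n}$ be symmetric positive definite, $c\in\mathbb{R}^n$, $f(x)=\tfrac12 x^THx+c^Tx$ and $g(x)=Hx+c$ its gradient. For $k\ge 1$ let $\mathcal{K}_k(c,H)=\mathrm{span}\{c,Hc,\dots,H^{k-1}c\}$, and $\mathcal{K}_0(c,H)=\{0\}$. Assume $c\neq 0$ and let $r\ge1$ be the smallest integer with $\mathcal{K}_r(c,H)=\mathcal{K}_{r+1}(c,H)$. For $k\ge 0$ let $\hat x_k$ be the (unique) minimizer of $f$ over $\mathcal{K}_k(c,H)$, $\hat g_k=g(\hat x_k)$, and $\hat q_k=\hat x_{k+1}-\hat x_k$ (so $\hat x_r=-H^{-1}c$ and $\hat q_k\ne 0$ for $k\le r-1$). For $x\in\mathcal{K}_k(c,H)$, the $(k-1)$-th subspace Newton step is $p^N_{k-1}(x)=\hat x_k-x$; likewise $p^N_k(x)=\hat x_{k+1}-x$. Two vectors are parallel, $p /\!/ p'$, if both are nonzero and $p=tp'$ for some scalar $t\neq 0$. *)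

theory Defs
  imports "HOL-Analysis.Analysis"
begin

definition spd :: "real^'n^'n \<Rightarrow> bool" where
  "spd H \<longleftrightarrow> transpose H = H \<and> (\<forall>x. x \<noteq> 0 \<longrightarrow> x \<bullet> (H *v x) > 0)"

definition quadf :: "real^'n^'n \<Rightarrow> real^'n \<Rightarrow> real^'n \<Rightarrow> real" where
  "quadf H c x = (1/2) * (x \<bullet> (H *v x)) + c \<bullet> x"

definition grad :: "real^'n^'n \<Rightarrow> real^'n \<Rightarrow> real^'n \<Rightarrow> real^'n" where
  "grad H c x = H *v x + c"

definition krylov :: "nat \<Rightarrow> real^'n \<Rightarrow> real^'n^'n \<Rightarrow> (real^'n) set" where
  "krylov k c H = span {((\<lambda>v. H *v v) ^^ i) c | i. i < k}"

definition krylov_r :: "real^'n \<Rightarrow> real^'n^'n \<Rightarrow> nat" where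
  "krylov_r c H = (LEAST r. 1 \<le> r \<and> krylov r c H = krylov (Suc r) c H)"

definition xhat :: "real^'n^'n \<Rightarrow> real^'n \<Rightarrow> nat \<Rightarrow> real^'n" where
  "xhat H c k = (THE x. x \<in> krylov k c H \<and> (\<forall>y \<in> krylov k c H. quadf H c x \<le> quadf H c y))"

definition ghat :: "real^'n^'n \<Rightarrow> real^'n \<Rightarrow> nat \<Rightarrow> real^'n" where
  "ghat H c k = grad H c (xhat H c k)"

definition qhat :: "real^'n^'n \<Rightarrow> real^'n \<Rightarrow> nat \<Rightarrow> real^'n" where
  "qhat H c k = xhat H c (Suc k) - xhat H c k"

definition newton_step :: "real^'n^'n \<Rightarrow> real^'n \<Rightarrow> nat \<Rightarrow> real^'n \<Rightarrow> real^'n" where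
  "newton_step H c k x = xhat H c (Suc k) - x"

definition parallel :: "real^'n \<Rightarrow> real^'n \<Rightarrow> bool" where
  "parallel p p' \<longleftrightarrow> p \<noteq> 0 \<and> p' \<noteq> 0 \<and> (\<exists>t. t \<noteq> 0 \<and> p = t *\<^sub>R p')"

end

theory Submission
  imports Defs
begin

text \<open>
  The minimiser of f over a subspace V is the unique point of V whose gradient is orthogonal
  to V. For k < r, K_(k+1) is spanned by g_k, q and K_(k-1): g_k is new because it is
  orthogonal to K_k, and q is new because H q = t (g_k - g_(k-1)) is orthogonal to K_(k-1).
  Since H q and H g_k are orthogonal to K_(k-1), so is the gradient g_k + \<beta> H g_k + \<gamma> H q of
  y = x_k + \<beta> g_k + \<gamma> q, and \<beta>, \<gamma> solve the 2x2 system making it orthogonal to g_k and q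
  as well. The determinant of that system is the H-Gram determinant of the independent pair
  g_k, q, which is positive by the strict Cauchy-Schwarz inequality for the H-inner product.
\<close>

lemma subspace_krylov: "subspace (krylov j c H)"
  by (simp add: krylov_def subspace_span)

lemma krylov_mono: "i \<le> j \<Longrightarrow> krylov i c H \<subseteq> krylov j c H"
  unfolding krylov_def by (rule span_mono) auto

lemma krylov_0 [simp]: "krylov 0 c H = {0}"
  by (simp add: krylov_def)

lemma span_krylov [simp]: "span (krylov j c H) = krylov j c H"
  by (simp add: krylov_def span_span)

lemma span_insert_span: "span (insert a (span S)) = span (insert a S)"
  by (simp add: span_insert span_span)

lemma krylov_Suc:
  "krylov (Suc j) c H = span (insert (((\<lambda>v. H *v v) ^^ j) c) (krylov j c H))"
proof -
  have "{((\<lambda>v. H *v v) ^^ i) c | i. i < Suc j}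
      = insert (((\<lambda>v. H *v v) ^^ j) c) {((\<lambda>v. H *v v) ^^ i) c | i. i < j}"
    by (auto simp: less_Suc_eq)
  then show ?thesis by (simp add: krylov_def span_insert_span)
qed

lemma c_in_krylov_Suc: "c \<in> krylov (Suc j) c H"
  unfolding krylov_def by (rule span_base) (auto intro!: exI[of _ 0])

lemma matrix_vector_mult_in_krylov_Suc:
  assumes "x \<in> krylov j c H"
  shows "H *v x \<in> krylov (Suc j) c H"
proof -
  let ?G = "\<lambda>j. {((\<lambda>v. H *v v) ^^ i) c | i. i < j}"
  have "(\<lambda>v. H *v v) ` ?G j \<subseteq> ?G (Suc j)"
  proof safe
    fix i assume "i < j"
    then show "\<exists>i'. H *v ((\<lambda>v. H *v v) ^^ i) c = ((\<lambda>v. H *v v) ^^ i') c \<and> i' < Suc j"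
      by (intro exI[of _ "Suc i"]) simp
  qed
  then have "span ((\<lambda>v. H *v v) ` ?G j) \<subseteq> krylov (Suc j) c H"
    unfolding krylov_def by (rule span_mono)
  moreover have "H *v x \<in> span ((\<lambda>v. H *v v) ` ?G j)"
    using assms linear_span_image[OF matrix_vector_mul_linear, where S="?G j"]
    unfolding krylov_def by blast
  ultimately show ?thesis by blast
qed

lemma krylov_Suc_subset_span_image:
  "krylov (Suc j) c H \<subseteq> span (insert c ((\<lambda>v. H *v v) ` krylov j c H))"
  unfolding krylov_def[of "Suc j"]
proof (rule span_minimal[OF _ subspace_span], safe)
  fix i assume "i < Suc j"
  then show "((\<lambda>v. H *v v) ^^ i) c \<in> span (insert c ((\<lambda>v. H *v v) ` krylov j c H))"
  proof (cases i)
    case (Suc i')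
    with \<open>i < Suc j\<close> have i': "((\<lambda>v. H *v v) ^^ i') c \<in> krylov j c H"
      unfolding krylov_def by (intro span_base) auto
    then show ?thesis using Suc by (intro span_base insertI2 image_eqI[OF _ i']) simp
  qed (simp add: span_base)
qed

lemma krylov_Suc_eq_span_insert:
  assumes v: "v \<in> krylov (Suc j) c H" and nv: "v \<notin> krylov j c H"
  shows "krylov (Suc j) c H = span (insert v (krylov j c H))"
proof
  let ?a = "((\<lambda>v. H *v v) ^^ j) c"
  show "span (insert v (krylov j c H)) \<subseteq> krylov (Suc j) c H"
    using v krylov_mono[of j "Suc j"] by (intro span_minimal subspace_krylov) auto
  have "v \<in> span (insert ?a (krylov j c H))" using v krylov_Suc by blast
  moreover have "v \<notin> span (krylov j c H)" using nv by simp
  ultimately have "?a \<in> span (insert v (krylov j c H))" by (rule in_span_insert)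
  then have "insert ?a (krylov j c H) \<subseteq> span (insert v (krylov j c H))"
    by (auto intro: span_base)
  then show "krylov (Suc j) c H \<subseteq> span (insert v (krylov j c H))"
    unfolding krylov_Suc by (intro span_minimal subspace_span)
qed

context
  fixes H :: "real^'n^'n" and c :: "real^'n"
  assumes spd: "spd H"
begin

lemma spd_inner_sym: "(H *v x) \<bullet> y = x \<bullet> (H *v y)"
proof -
  have "transpose H = H" using spd by (simp add: spd_def)
  then show ?thesis by (metis dot_lmul_matrix vector_transpose_matrix)
qed

lemma spd_quadratic_pos: "x \<noteq> 0 \<Longrightarrow> x \<bullet> (H *v x) > 0"
  using spd by (simp add: spd_def)

lemma spd_quadratic_nonneg: "x \<bullet> (H *v x) \<ge> 0"
  using spd_quadratic_pos[of x] by (cases "x = 0") auto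

lemma spd_quadratic_eq_0: "x \<bullet> (H *v x) = 0 \<Longrightarrow> x = 0"
  using spd_quadratic_pos by fastforce

lemma continuous_on_quadratic: "continuous_on S (\<lambda>x. x \<bullet> (H *v x))"
proof -
  have "continuous_on S (\<lambda>v. H *v v)"
    using matrix_vector_mul_linear linear_conv_bounded_linear linear_continuous_on by blast
  then show ?thesis by (intro continuous_intros)
qed

lemma spd_coercive: "\<exists>m>0. \<forall>x. m * (norm x)^2 \<le> x \<bullet> (H *v x)"
proof -
  obtain u where u: "u \<in> sphere 0 1"
    and umin: "\<forall>y\<in>sphere 0 1. u \<bullet> (H *v u) \<le> y \<bullet> (H *v y)"
    using continuous_attains_inf[OF compact_sphere[of 0 1] _ continuous_on_quadratic] by auto
  have "u \<bullet> (H *v u) * (norm x)^2 \<le> x \<bullet> (H *v x)" for x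
  proof (cases "x = 0")
    case False
    let ?y = "(1 / norm x) *\<^sub>R x"
    have "?y \<in> sphere 0 1" using False by simp
    then have "u \<bullet> (H *v u) \<le> ?y \<bullet> (H *v ?y)" using umin by blast
    also have "?y \<bullet> (H *v ?y) = (x \<bullet> (H *v x)) / (norm x)^2"
      by (simp add: matrix_vector_mult_scaleR power2_eq_square)
    finally show ?thesis using False by (simp add: pos_le_divide_eq)
  qed simp
  moreover have "u \<bullet> (H *v u) > 0" using u by (intro spd_quadratic_pos) auto
  ultimately show ?thesis by blast
qed

lemma quadf_add:
  "quadf H c (z + y) = quadf H c z + grad H c z \<bullet> y + (1/2) * (y \<bullet> (H *v y))"
proof -
  have "z \<bullet> (H *v y) = y \<bullet> (H *v z)" using spd_inner_sym[of y z] by (simp add: inner_commute)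
  then show ?thesis
    unfolding quadf_def grad_def
    by (simp add: matrix_vector_right_distrib inner_add_left inner_add_right inner_commute
        algebra_simps)
qed

lemma quadf_attains_min_on_subspace:
  assumes V: "subspace V"
  shows "\<exists>z\<in>V. \<forall>y\<in>V. quadf H c z \<le> quadf H c y"
proof -
  obtain m where m: "m > 0" "\<And>x. m * (norm x)^2 \<le> x \<bullet> (H *v x)"
    using spd_coercive by blast
  define R where "R = 2 * norm c / m"
  let ?S = "V \<inter> cball 0 R"
  have "0 \<in> ?S" using V m by (auto simp: subspace_0 R_def)
  moreover have "continuous_on ?S (quadf H c)"
    unfolding quadf_def[abs_def] using continuous_on_quadratic by (auto intro!: continuous_intros)
  moreover have "compact ?S" using closed_subspace[OF V] by (simp add: closed_Int_compact)
  ultimately obtain z where z: "z \<in> ?S" "\<forall>y\<in>?S. quadf H c z \<le> quadf H c y"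
    using continuous_attains_inf by blast
  have "quadf H c z \<le> quadf H c y" if "y \<in> V" for y
  proof (cases "norm y \<le> R")
    case False
    \<comment> \<open>outside the ball, f y \<ge> m |y|^2/2 - |c| |y| > 0 = f 0\<close>
    have "- (norm c * norm y) \<le> c \<bullet> y" using Cauchy_Schwarz_ineq2[of c y] by simp
    moreover have "m * (norm y)^2 \<le> y \<bullet> (H *v y)" by (rule m(2))
    moreover have "2 * norm c * norm y < m * (norm y)^2"
    proof -
      have "2 * norm c < norm y * m"
        using False m(1) pos_divide_less_eq[of m "2 * norm c" "norm y"] by (simp add: R_def)
      moreover have "norm y > 0" using False m(1) unfolding R_def
        by (smt (verit) divide_nonneg_pos norm_ge_zero)
      ultimately have "2 * norm c * norm y < norm y * m * norm y" by (rule mult_strict_right_mono)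
      then show ?thesis by (simp add: power2_eq_square algebra_simps)
    qed
    ultimately have "0 < quadf H c y" by (simp add: quadf_def)
    moreover have "quadf H c z \<le> quadf H c 0" using z \<open>0 \<in> ?S\<close> by blast
    ultimately show ?thesis by (simp add: quadf_def)
  qed (use z that in auto)
  then show ?thesis using z by blast
qed

lemma grad_orthogonal_at_min:
  assumes V: "subspace V" and z: "z \<in> V" and zmin: "\<forall>y\<in>V. quadf H c z \<le> quadf H c y"
    and y: "y \<in> V"
  shows "grad H c z \<bullet> y = 0"
proof (rule ccontr)
  define b where "b = grad H c z \<bullet> y"
  define a where "a = y \<bullet> (H *v y)"
  assume "grad H c z \<bullet> y \<noteq> 0"
  then have "b \<noteq> 0" "y \<noteq> 0" by (auto simp: b_def)
  then have "a > 0" using spd_quadratic_pos by (simp add: a_def)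
  \<comment> \<open>the exact line search step t = -b/a along y decreases f by b^2/(2a)\<close>
  define t where "t = - b / a"
  have "z + t *\<^sub>R y \<in> V" by (rule subspace_add[OF V z subspace_scale[OF V y]])
  then have "quadf H c z \<le> quadf H c (z + t *\<^sub>R y)" using zmin by blast
  also have "\<dots> = quadf H c z + t * b + (1/2) * (t * t * a)"
    by (simp add: quadf_add matrix_vector_mult_scaleR a_def b_def)
  also have "\<dots> = quadf H c z - b^2 / (2 * a)"
    using \<open>a > 0\<close> by (simp add: t_def field_simps power2_eq_square)
  finally have "b^2 / (2 * a) \<le> 0" by simp
  then show False using \<open>b \<noteq> 0\<close> \<open>a > 0\<close> by (simp add: divide_le_0_iff)
qed

lemma xhat_eqI:
  assumes z: "z \<in> krylov j c H" and orth: "\<forall>y\<in>krylov j c H. grad H c z \<bullet> y = 0"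
  shows "xhat H c j = z"
proof -
  let ?V = "krylov j c H"
  have quadf_eq: "quadf H c y = quadf H c z + (1/2) * ((y - z) \<bullet> (H *v (y - z)))"
    if "y \<in> ?V" for y
    using quadf_add[of z "y - z"] orth subspace_diff[OF subspace_krylov that z] by simp
  have le: "quadf H c z \<le> quadf H c y" if "y \<in> ?V" for y
    using quadf_eq[OF that] spd_quadratic_nonneg[of "y - z"] by linarith
  show ?thesis unfolding xhat_def
  proof (rule the_equality)
    show "z \<in> ?V \<and> (\<forall>y\<in>?V. quadf H c z \<le> quadf H c y)"
      using z le by blast
    fix w assume w: "w \<in> ?V \<and> (\<forall>y\<in>?V. quadf H c w \<le> quadf H c y)"
    then have "quadf H c w \<le> quadf H c z" using z by blast
    then have "(w - z) \<bullet> (H *v (w - z)) = 0"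
      using quadf_eq[of w] w spd_quadratic_nonneg[of "w - z"] by linarith
    then show "w = z" using spd_quadratic_eq_0[of "w - z"] by simp
  qed
qed

lemma xhat_in_krylov_and_ghat_orthogonal:
  "xhat H c j \<in> krylov j c H \<and> (\<forall>y\<in>krylov j c H. ghat H c j \<bullet> y = 0)"
proof -
  obtain z where z: "z \<in> krylov j c H" "\<forall>y\<in>krylov j c H. quadf H c z \<le> quadf H c y"
    using quadf_attains_min_on_subspace[OF subspace_krylov] by blast
  moreover have orth: "\<forall>y\<in>krylov j c H. grad H c z \<bullet> y = 0"
    using grad_orthogonal_at_min[OF subspace_krylov z] by blast
  ultimately show ?thesis using xhat_eqI[OF z(1) orth] by (simp add: ghat_def)
qed

lemma xhat_in_krylov: "xhat H c j \<in> krylov j c H"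
  using xhat_in_krylov_and_ghat_orthogonal by blast

lemma ghat_orthogonal_krylov: "y \<in> krylov j c H \<Longrightarrow> ghat H c j \<bullet> y = 0"
  using xhat_in_krylov_and_ghat_orthogonal by blast

lemma ghat_in_krylov_Suc: "ghat H c j \<in> krylov (Suc j) c H"
  unfolding ghat_def grad_def
  by (intro subspace_add[OF subspace_krylov] matrix_vector_mult_in_krylov_Suc xhat_in_krylov
      c_in_krylov_Suc)

lemma inj_on_matrix_vector_mult: "inj_on (\<lambda>v. H *v v) A"
proof (rule inj_onI)
  fix x y assume "H *v x = H *v y"
  then have "(x - y) \<bullet> (H *v (x - y)) = 0" by (simp add: matrix_vector_mult_diff_distrib)
  then show "x = y" using spd_quadratic_eq_0[of "x - y"] by simp
qed

lemma ghat_nonzero: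
  assumes c: "c \<noteq> 0" and j: "j < krylov_r c H"
  shows "ghat H c j \<noteq> 0"
proof
  \<comment> \<open>if g_j = 0 then c \<in> H K_j, so K_(j+1) \<subseteq> H K_j, whose dimension is that of K_j\<close>
  let ?F = "\<lambda>v. H *v v"
  assume g0: "ghat H c j = 0"
  then have "c = ?F (- xhat H c j)"
    by (simp add: ghat_def grad_def vec.neg eq_neg_iff_add_eq_0 add.commute)
  then have "c \<in> ?F ` krylov j c H"
    by (rule image_eqI[OF _ subspace_neg[OF subspace_krylov xhat_in_krylov]])
  moreover have sub: "subspace (?F ` krylov j c H)"
    by (rule linear_subspace_image[OF matrix_vector_mul_linear subspace_krylov])
  ultimately have "span (insert c (?F ` krylov j c H)) = ?F ` krylov j c H"
    by (simp add: span_redundant span_base span_eq_iff)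
  then have "krylov (Suc j) c H \<subseteq> ?F ` krylov j c H"
    using krylov_Suc_subset_span_image[of j c H] by simp
  then have "dim (krylov (Suc j) c H) \<le> dim (?F ` krylov j c H)" by (rule dim_subset)
  also have "\<dots> = dim (krylov j c H)"
    by (rule dim_image_eq[OF matrix_vector_mul_linear inj_on_matrix_vector_mult])
  finally have "krylov j c H = krylov (Suc j) c H"
    using krylov_mono[of j "Suc j"] by (intro subspace_dim_equal subspace_krylov) auto
  moreover have "j \<noteq> 0"
  proof
    assume "j = 0"
    then have "ghat H c j = c" using xhat_in_krylov[of 0] by (simp add: ghat_def grad_def)
    with g0 c show False by simp
  qed
  ultimately show False
    using not_less_Least[OF j[unfolded krylov_r_def]] by simp
qed

lemma krylov_Suc_eq_span_ghat:
  assumes "c \<noteq> 0" and "j < krylov_r c H"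
  shows "krylov (Suc j) c H = span (insert (ghat H c j) (krylov j c H))"
  using ghat_in_krylov_Suc ghat_orthogonal_krylov[of "ghat H c j" j] ghat_nonzero[OF assms]
  by (intro krylov_Suc_eq_span_insert) auto

lemma krylov_Suc_eq_span_conjugate:
  assumes "v \<in> krylov (Suc j) c H" and "v \<noteq> 0"
    and "\<And>z. z \<in> krylov j c H \<Longrightarrow> (H *v v) \<bullet> z = 0"
  shows "krylov (Suc j) c H = span (insert v (krylov j c H))"
  using assms spd_quadratic_eq_0[of v] by (intro krylov_Suc_eq_span_insert) (auto simp: inner_commute)

lemma matrix_vector_mult_qhat: "H *v qhat H c j = ghat H c (Suc j) - ghat H c j"
  by (simp add: qhat_def ghat_def grad_def matrix_vector_mult_diff_distrib)

lemma qhat_in_krylov_Suc: "qhat H c j \<in> krylov (Suc j) c H"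
  using xhat_in_krylov[of "Suc j"] xhat_in_krylov[of j] krylov_mono[of j "Suc j" c H]
  by (auto simp: qhat_def intro: subspace_diff[OF subspace_krylov])

lemma matrix_vector_mult_qhat_orthogonal:
  "z \<in> krylov j c H \<Longrightarrow> (H *v qhat H c j) \<bullet> z = 0"
  using krylov_mono[of j "Suc j" c H]
  by (auto simp: matrix_vector_mult_qhat inner_diff_left ghat_orthogonal_krylov)

lemma matrix_vector_mult_ghat_orthogonal:
  "z \<in> krylov j c H \<Longrightarrow> (H *v ghat H c (Suc j)) \<bullet> z = 0"
  by (simp add: spd_inner_sym ghat_orthogonal_krylov matrix_vector_mult_in_krylov_Suc)

lemma gram_det_pos:
  assumes u: "u \<noteq> 0" and v: "\<forall>t. v \<noteq> t *\<^sub>R u"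
  shows "(u \<bullet> (H *v u)) * (v \<bullet> (H *v v)) - (u \<bullet> (H *v v))^2 > 0"
proof -
  define a b d where "a = u \<bullet> (H *v u)" and "b = u \<bullet> (H *v v)" and "d = v \<bullet> (H *v v)"
  have a: "a > 0" using spd_quadratic_pos[OF u] by (simp add: a_def)
  \<comment> \<open>-a times the component of v H-orthogonal to u\<close>
  define w where "w = b *\<^sub>R u - a *\<^sub>R v"
  have "w \<noteq> 0"
  proof
    assume "w = 0"
    then have "(1 / a) *\<^sub>R (a *\<^sub>R v) = (1 / a) *\<^sub>R (b *\<^sub>R u)" by (simp add: w_def)
    then have "v = (b / a) *\<^sub>R u" using a by simp
    then show False using v by blast
  qed
  have "v \<bullet> (H *v u) = b" using spd_inner_sym[of v u] by (simp add: b_def inner_commute)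
  then have "w \<bullet> (H *v w) = a * (a * d - b^2)"
    unfolding w_def
    by (simp add: matrix_vector_mult_diff_distrib matrix_vector_mult_scaleR inner_diff_left
        inner_diff_right a_def[symmetric] b_def[symmetric] d_def[symmetric] power2_eq_square
        algebra_simps)
  with spd_quadratic_pos[OF \<open>w \<noteq> 0\<close>] a show ?thesis
    by (simp add: a_def b_def d_def zero_less_mult_iff)
qed

lemma grad_two_term_update_orthogonal:
  assumes g: "grad H c z = g" and gq: "g \<bullet> q = 0"
  defines "D \<equiv> (g \<bullet> (H *v g)) * (q \<bullet> (H *v q)) - (g \<bullet> (H *v q))^2"
  defines "\<beta> \<equiv> - ((g \<bullet> g) * (q \<bullet> (H *v q))) / D"
  defines "\<gamma> \<equiv> ((g \<bullet> g) * (q \<bullet> (H *v g))) / D"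
  assumes D: "D \<noteq> 0"
  shows "grad H c (z + \<beta> *\<^sub>R g + \<gamma> *\<^sub>R q) \<bullet> g = 0"
    and "grad H c (z + \<beta> *\<^sub>R g + \<gamma> *\<^sub>R q) \<bullet> q = 0"
proof -
  define a b d where "a = g \<bullet> (H *v g)" and "b = g \<bullet> (H *v q)" and "d = q \<bullet> (H *v q)"
  have qHg: "q \<bullet> (H *v g) = b" using spd_inner_sym[of q g] by (simp add: b_def inner_commute)
  have "(H *v g) \<bullet> g = a" "(H *v q) \<bullet> g = b" "(H *v g) \<bullet> q = b" "(H *v q) \<bullet> q = d"
    using qHg by (simp_all add: a_def b_def d_def inner_commute)
  moreover have "grad H c (z + \<beta> *\<^sub>R g + \<gamma> *\<^sub>R q) = g + \<beta> *\<^sub>R (H *v g) + \<gamma> *\<^sub>R (H *v q)"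
    using g by (simp add: grad_def matrix_vector_right_distrib matrix_vector_mult_scaleR
        algebra_simps)
  ultimately have grad_g: "grad H c (z + \<beta> *\<^sub>R g + \<gamma> *\<^sub>R q) \<bullet> g = g \<bullet> g + \<beta> * a + \<gamma> * b"
    and grad_q: "grad H c (z + \<beta> *\<^sub>R g + \<gamma> *\<^sub>R q) \<bullet> q = \<beta> * b + \<gamma> * d"
    using gq by (simp_all add: inner_add_left)
  show "grad H c (z + \<beta> *\<^sub>R g + \<gamma> *\<^sub>R q) \<bullet> g = 0" unfolding grad_g using D
    by (simp add: \<beta>_def \<gamma>_def D_def qHg a_def[symmetric] b_def[symmetric] d_def[symmetric]
        field_simps power2_eq_square)
  show "grad H c (z + \<beta> *\<^sub>R g + \<gamma> *\<^sub>R q) \<bullet> q = 0" unfolding grad_q using D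
    by (simp add: \<beta>_def \<gamma>_def D_def qHg b_def[symmetric] d_def[symmetric] field_simps)
qed

lemma xhat_Suc_update:
  assumes c: "c \<noteq> 0" and k: "0 < k" "k < krylov_r c H"
    and par: "parallel q (qhat H c (k - 1))"
  defines "g \<equiv> ghat H c k"
  defines "D \<equiv> (g \<bullet> (H *v g)) * (q \<bullet> (H *v q)) - (g \<bullet> (H *v q))^2"
  defines "\<beta> \<equiv> - ((g \<bullet> g) * (q \<bullet> (H *v q))) / D"
  defines "\<gamma> \<equiv> ((g \<bullet> g) * (q \<bullet> (H *v g))) / D"
  shows "D \<noteq> 0 \<and> xhat H c (Suc k) = xhat H c k + \<beta> *\<^sub>R g + \<gamma> *\<^sub>R q"
proof -
  let ?K = "\<lambda>j. krylov j c H"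
  obtain j where j: "k = Suc j" using k by (cases k) auto
  obtain t where q: "q = t *\<^sub>R qhat H c j" "q \<noteq> 0" using par by (auto simp: parallel_def j)
  have g: "g \<noteq> 0" using ghat_nonzero[OF c k(2)] by (simp add: g_def)
  have q_in: "q \<in> ?K k"
    unfolding q j by (rule subspace_scale[OF subspace_krylov qhat_in_krylov_Suc])
  have Hq_orth: "(H *v q) \<bullet> z = 0" if "z \<in> ?K j" for z
    using matrix_vector_mult_qhat_orthogonal[OF that] by (simp add: q matrix_vector_mult_scaleR)
  have Hg_orth: "(H *v g) \<bullet> z = 0" if "z \<in> ?K j" for z
    using matrix_vector_mult_ghat_orthogonal[OF that] by (simp add: g_def j)
  have gq: "g \<bullet> q = 0" using ghat_orthogonal_krylov[OF q_in] by (simp add: g_def)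
  have "?K k = span (insert q (?K j))"
    unfolding j by (rule krylov_Suc_eq_span_conjugate[OF q_in[unfolded j] q(2) Hq_orth])
  then have K_Suc_k: "?K (Suc k) = span (insert g (insert q (?K j)))"
    using krylov_Suc_eq_span_ghat[OF c k(2)] by (simp add: g_def span_insert_span)
  have "\<forall>s. q \<noteq> s *\<^sub>R g" using gq g q(2) by auto
  then have "D > 0" unfolding D_def by (rule gram_det_pos[OF g])
  define y where "y = xhat H c k + \<beta> *\<^sub>R g + \<gamma> *\<^sub>R q"
  have y: "y \<in> ?K (Suc k)"
    using K_Suc_k xhat_in_krylov[of k] krylov_mono[of k "Suc k" c H]
    by (auto simp: y_def intro!: span_add span_mul intro: span_base)
  have grad_y: "grad H c y = g + \<beta> *\<^sub>R (H *v g) + \<gamma> *\<^sub>R (H *v q)"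
    by (simp add: y_def g_def ghat_def grad_def matrix_vector_right_distrib
        matrix_vector_mult_scaleR algebra_simps)
  have grad_y_g: "grad H c y \<bullet> g = 0" and grad_y_q: "grad H c y \<bullet> q = 0"
    using grad_two_term_update_orthogonal[OF _ gq] \<open>D > 0\<close>
    unfolding y_def \<beta>_def \<gamma>_def D_def by (simp_all add: g_def ghat_def)
  have "orthogonal (grad H c y) z" if "z \<in> insert g (insert q (?K j))" for z
  proof -
    have "z \<in> ?K j \<Longrightarrow> g \<bullet> z = 0"
      using krylov_mono[of j k c H] ghat_orthogonal_krylov by (auto simp: g_def j)
    then show ?thesis using that grad_y_g grad_y_q Hq_orth Hg_orth
      by (auto simp: orthogonal_def grad_y inner_add_left)
  qed
  then have "\<forall>z\<in>?K (Suc k). grad H c y \<bullet> z = 0"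
    unfolding K_Suc_k using orthogonal_to_span by (fastforce simp: orthogonal_def)
  with \<open>D > 0\<close> show ?thesis using xhat_eqI[OF y] by (simp add: y_def)
qed

end

theorem mainTheorem1:
  fixes H :: "real^'n^'n" and c x q :: "real^'n" and k :: nat
  assumes "spd H" and "c \<noteq> 0"
    and "1 \<le> k" and "k \<le> krylov_r c H - 1"
    and "x \<in> krylov k c H"
    and "parallel q (qhat H c (k - 1))"
  shows "let g = ghat H c k;
             D = (g \<bullet> (H *v g)) * (q \<bullet> (H *v q)) - (g \<bullet> (H *v q))^2;
             \<beta> = - ((g \<bullet> g) * (q \<bullet> (H *v q))) / D;
             \<gamma> = ((g \<bullet> g) * (q \<bullet> (H *v g))) / D
         in D \<noteq> 0 \<and>
            newton_step H c k x = newton_step H c (k - 1) x + \<beta> *\<^sub>R g + \<gamma> *\<^sub>R q"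
proof -
  have "0 < k" "k < krylov_r c H" using assms(3,4) by linarith+
  from xhat_Suc_update[OF assms(1,2) this assms(6)] show ?thesis
    using assms(3) by (simp add: Let_def newton_step_def algebra_simps)
qed

end
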